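(* Let $L\geq1$ be an integer, $P\geq 0$, $p_B\in[0,1]$. Let $\beta_1,\ldots,\beta_L$ be i.i.d. with $\mathbb{P}(\beta_l=0)=p_B$, $\mathbb{P}(\beta_l=1)=1-p_B$; let $\theta_1,\ldots,\theta_L$ be i.i.d. $\mathrm{Uniform}(0,2\pi)$; let $\{\phi_{l,k}\}_{l\in\{1,\ldots,L\},k\geq1}$ be i.i.d. $\mathrm{Uniform}(0,2\pi)$; all these families mutually independent. Let $\alpha=\sum_{l=1}^L\beta_l$, $h[k]:=\sum_{l=1}^L\beta_le^{j(\theta_l+\phi_{l,k})}$, and for integers $i\geq0$ $$\bar R(i):=\mathbb{E}\Big[\log\Big(1+\Big|\textstyle\sum_{l=1}^i e^{j\vartheta_l}\Big|^2P\Big)\Big],$$ where $\vartheta_1,\vartheta_2,\ldots$ are i.i.d. $\mathrm{Uniform}(0,2\pi)$. Then for every $\epsilon>0$, $$\lim_{K\to\infty}\mathbb{P}\Big(\Big|\frac1K\sum_{k=1}^K\log(1+|h[k]|^2P)-\bar R(\alpha)\Big|\geq\epsilon\Big)=0.$$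
   Context: This concerns non-coherent joint transmission with "phase diversity": each transmitter $l$ multiplies the $k$-th symbol of a frame of $K$ symbols by a random phase $e^{j\phi_{l,k}}$ known to all parties. $\log$ is the logarithm in a fixed base. *)

theory Defs
  imports "HOL-Probability.Probability"
begin

definition unif_2pi :: "real measure" where
  "unif_2pi = uniform_measure lborel {0..2*pi}"

definition Rbar :: "real \<Rightarrow> real \<Rightarrow> nat \<Rightarrow> real" where
  "Rbar b P i = (\<integral>v. log b (1 + (cmod (\<Sum>l=1..i. cis (v l)))\<^sup>2 * P)
                    \<partial>(PiM {1..i} (\<lambda>_. unif_2pi)))"

datatype rv_index = IBeta nat | ITheta nat | IPhi nat nat

end

theory Submission
  imports Defs "HOL-Library.Real_Mod"
begin

text \<open>
  Let \<open>Y\<^sub>k\<close> be the rate of symbol \<open>k\<close> minus \<open>Rbar(\<alpha>)\<close>. Conditionally on \<open>\<beta>\<close>, \<open>\<theta>\<close> and all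
  phases except \<open>\<phi>\<^sub>l\<^sub>k\<close>, \<open>l = 1..L\<close>, these \<open>L\<close> phases are still i.i.d. uniform, and since the
  uniform distribution on the circle is rotation invariant, the offsets \<open>\<theta>\<^sub>l\<close> can be absorbed
  into them: the conditional mean of the rate of symbol \<open>k\<close> is exactly \<open>Rbar(\<alpha>)\<close>. Hence the
  \<open>Y\<^sub>k\<close> are orthogonal, and as \<open>|Y\<^sub>k| \<le> 2 |log (1 + L\<^sup>2 P)|\<close>, Chebyshev's inequality bounds the
  probability of an \<open>\<epsilon>\<close>-deviation of their average by \<open>4 log\<^sup>2(1 + L\<^sup>2 P) / (K \<epsilon>\<^sup>2)\<close>.
  Independence identifies the joint law of the variables with the product of their laws, where
  the conditioning is Fubini's theorem.
\<close>

section \<open>Rotation invariance of the uniform phase\<close>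

lemma prob_space_unif_2pi: "prob_space unif_2pi"
  unfolding unif_2pi_def by (rule prob_space_uniform_measure) auto

lemma sets_unif_2pi [simp, measurable_cong]: "sets unif_2pi = sets borel"
  by (simp add: unif_2pi_def)

lemma space_unif_2pi [simp]: "space unif_2pi = UNIV"
  by (simp add: unif_2pi_def)

lemma integral_unif_2pi:
  fixes f :: "real \<Rightarrow> real"
  assumes [measurable]: "f \<in> borel_measurable borel"
  shows "integral\<^sup>L unif_2pi f = (LBINT x=0..2*pi. f x) / (2*pi)"
proof -
  have density: "unif_2pi = density lborel (\<lambda>x. ennreal (indicator {0..2*pi} x / (2*pi)))"
    unfolding unif_2pi_def uniform_measure_def
    using divide_ennreal[of 1 "2*pi"] by (intro density_cong) (auto simp: indicator_def)
  have "integral\<^sup>L unif_2pi f = (\<integral>x. (indicator {0..2*pi} x / (2*pi)) *\<^sub>R f x \<partial>lborel)"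
    unfolding density by (subst integral_density) auto
  also have "\<dots> = (\<integral>x. indicator {0..2*pi} x *\<^sub>R f x \<partial>lborel) / (2*pi)"
    by (simp add: mult.commute)
  finally show ?thesis
    using interval_integral_Icc[of 0 "2*pi" f] by (simp add: set_lebesgue_integral_def zero_ereal_def)
qed

lemma interval_lebesgue_integrable_bounded:
  fixes f :: "real \<Rightarrow> real"
  assumes [measurable]: "f \<in> borel_measurable borel" and "\<And>x. \<bar>f x\<bar> \<le> B"
  shows "interval_lebesgue_integrable lborel (ereal a) (ereal b) f"
proof -
  have "set_integrable lborel {min a b<..<max a b} f"
    unfolding set_integrable_def
    by (rule integrableI_bounded_set_indicator[where B=B]) (auto simp: assms(2))
  then show ?thesis
    by (auto simp: interval_lebesgue_integrable_def min_def max_def split: if_splits)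
qed

lemma interval_integral_translate:
  fixes f :: "real \<Rightarrow> real"
  assumes "a \<le> b"
  shows "(LBINT x=ereal a..ereal b. f (d + x)) = (LBINT u=ereal (d + a)..ereal (d + b). f u)"
proof -
  have "(LBINT x=ereal a..ereal b. f (d + x)) = (LBINT x. indicator {d+a..d+b} (d + 1*x) * f (d + 1*x))"
    using interval_integral_Icc[of a b "\<lambda>x. f (d + x)"] assms
    by (simp add: set_lebesgue_integral_def indicator_def)
  also have "\<dots> = (LBINT u. indicator {d+a..d+b} u * f u)"
    using lborel_integral_real_affine[of 1 "\<lambda>u. indicator {d+a..d+b} u * f u" d] by simp
  also have "\<dots> = (LBINT u=ereal (d + a)..ereal (d + b). f u)"
    using interval_integral_Icc[of "d+a" "d+b" f] assms by (simp add: set_lebesgue_integral_def)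
  finally show ?thesis .
qed

lemma interval_integral_periodic_translate:
  fixes f :: "real \<Rightarrow> real"
  assumes [measurable]: "f \<in> borel_measurable borel" and bounded: "\<And>x. \<bar>f x\<bar> \<le> B"
    and periodic: "\<And>x. f (x + p) = f x" and "0 \<le> c" "c \<le> p"
  shows "(LBINT x=ereal 0..ereal p. f (c + x)) = (LBINT x=ereal 0..ereal p. f x)"
proof -
  have integrable: "interval_lebesgue_integrable lborel (ereal a) (ereal b) f" for a b
    by (rule interval_lebesgue_integrable_bounded[OF assms(1) bounded])
  have "(LBINT x=ereal 0..ereal p. f (c + x)) = (LBINT u=ereal c..ereal (c + p). f u)"
    using interval_integral_translate[of 0 p f c] assms by simp
  also have "\<dots> = (LBINT u=ereal c..ereal p. f u) + (LBINT u=ereal p..ereal (p + c). f u)"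
    using interval_integral_sum[of "ereal c" "ereal p" "ereal (c + p)" f] integrable assms
    by (simp add: add.commute min_def max_def)
  also have "(LBINT u=ereal p..ereal (p + c). f u) = (LBINT x=ereal 0..ereal c. f x)"
    using interval_integral_translate[of 0 c f p] assms by (simp add: periodic add.commute)
  also have "(LBINT u=ereal c..ereal p. f u) + (LBINT x=ereal 0..ereal c. f x)
      = (LBINT x=ereal 0..ereal p. f x)"
    using interval_integral_sum[of "ereal 0" "ereal c" "ereal p" f] integrable assms
    by (simp add: min_def max_def)
  finally show ?thesis .
qed

lemma borel_measurable_rmod [measurable]: "(\<lambda>x::real. x rmod p) \<in> borel_measurable borel"
  unfolding rmod_def by measurable

lemma integral_unif_2pi_periodic_translate:
  fixes f :: "real \<Rightarrow> real"
  assumes [measurable]: "f \<in> borel_measurable borel" and "\<And>x. \<bar>f x\<bar> \<le> B"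
    and "\<And>x. f (x + 2*pi) = f x" and "0 \<le> c" "c \<le> 2*pi"
  shows "(\<integral>v. f (c + v) \<partial>unif_2pi) = (\<integral>v. f v \<partial>unif_2pi)"
proof -
  have "(\<integral>v. f (c + v) \<partial>unif_2pi) = (LBINT v=ereal 0..ereal (2*pi). f (c + v)) / (2*pi)"
    by (subst integral_unif_2pi) (auto simp: zero_ereal_def)
  also have "\<dots> = (LBINT v=ereal 0..ereal (2*pi). f v) / (2*pi)"
    using assms by (subst interval_integral_periodic_translate) auto
  also have "\<dots> = (\<integral>v. f v \<partial>unif_2pi)"
    by (subst integral_unif_2pi) (auto simp: zero_ereal_def)
  finally show ?thesis .
qed

lemma distr_unif_2pi_rotate:
  "distr unif_2pi unif_2pi (\<lambda>v. (c + v) rmod (2*pi)) = unif_2pi"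
proof (rule measure_eqI)
  interpret prob_space unif_2pi by (rule prob_space_unif_2pi)
  fix A assume "A \<in> sets (distr unif_2pi unif_2pi (\<lambda>v. (c + v) rmod (2*pi)))"
  then have [measurable]: "A \<in> sets borel" by simp
  define g where "g x = (indicator A (x rmod (2*pi)) :: real)" for x
  have [measurable]: "g \<in> borel_measurable borel" unfolding g_def by measurable
  have g_periodic: "g (v + 2*pi) = g v" for v
    unfolding g_def by (metis rmod_add rmod_self add_0_right rmod_rmod)
  have g_rotate: "g (c + v) = g (c rmod (2*pi) + v)" for v
    unfolding g_def by (metis rmod_add rmod_rmod)
  have "AE v in lborel. v \<in> {0..2*pi} \<longrightarrow> g v = indicator A v"
    using AE_lborel_singleton[of "2*pi"] by eventually_elim (auto simp: g_def)
  then have g_AE: "AE v in unif_2pi. g v = indicator A v"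
    unfolding unif_2pi_def by (subst AE_uniform_measure) auto
  have "measure unif_2pi ((\<lambda>v. (c + v) rmod (2*pi)) -` A)
      = (\<integral>v. indicator ((\<lambda>v. (c + v) rmod (2*pi)) -` A) v \<partial>unif_2pi)"
    by simp
  also have "\<dots> = (\<integral>v. g (c rmod (2*pi) + v) \<partial>unif_2pi)"
    unfolding g_rotate[symmetric] by (simp add: g_def indicator_def)
  also have "\<dots> = (\<integral>v. g v \<partial>unif_2pi)"
    using g_periodic by (intro integral_unif_2pi_periodic_translate[where B=1])
      (auto simp: g_def rmod_nonneg rmod_le)
  also have "\<dots> = measure unif_2pi A"
    using g_AE by (subst integral_cong_AE[where g="indicator A"]) auto
  finally show "emeasure (distr unif_2pi unif_2pi (\<lambda>v. (c + v) rmod (2*pi))) A = emeasure unif_2pi A"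
    by (simp add: emeasure_distr emeasure_eq_measure)
qed simp

section \<open>Products of uniform phases\<close>

lemma distr_PiM_componentwise:
  assumes "finite I" and prob_M: "\<And>i. prob_space (M i)" and prob_N: "\<And>i. prob_space (N i)"
    and [measurable]: "\<And>i. f i \<in> measurable (M i) (N i)"
  shows "distr (PiM I M) (PiM I N) (\<lambda>x. \<lambda>i\<in>I. f i (x i)) = PiM I (\<lambda>i. distr (M i) (N i) (f i))"
proof -
  interpret M: product_prob_space M by (intro product_prob_spaceI prob_M)
  interpret product_prob_space "\<lambda>i. distr (M i) (N i) (f i)"
    by (intro product_prob_spaceI prob_space.prob_space_distr prob_M) simp
  have [measurable]: "(\<lambda>x. \<lambda>i\<in>I. f i (x i)) \<in> measurable (PiM I M) (PiM I N)"
    by (intro measurable_restrict) measurable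
  show ?thesis
  proof (rule PiM_eqI[OF \<open>finite I\<close>])
    show "sets (distr (PiM I M) (PiM I N) (\<lambda>x. \<lambda>i\<in>I. f i (x i))) = sets (PiM I (\<lambda>i. distr (M i) (N i) (f i)))"
      unfolding sets_distr by (intro sets_PiM_cong) simp_all
    fix A assume A: "\<And>i. i \<in> I \<Longrightarrow> A i \<in> sets (distr (M i) (N i) (f i))"
    have "(\<lambda>x. \<lambda>i\<in>I. f i (x i)) -` Pi\<^sub>E I A \<inter> space (PiM I M) = Pi\<^sub>E I (\<lambda>i. f i -` A i \<inter> space (M i))"
      by (auto simp: space_PiM PiE_iff)
    then have "emeasure (distr (PiM I M) (PiM I N) (\<lambda>x. \<lambda>i\<in>I. f i (x i))) (Pi\<^sub>E I A)
        = emeasure (PiM I M) (Pi\<^sub>E I (\<lambda>i. f i -` A i \<inter> space (M i)))"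
      using A \<open>finite I\<close> by (subst emeasure_distr) (auto intro!: sets_PiM_I_finite)
    also have "\<dots> = (\<Prod>i\<in>I. emeasure (M i) (f i -` A i \<inter> space (M i)))"
      using A by (subst M.emeasure_PiM) (auto simp: \<open>finite I\<close>)
    also have "\<dots> = (\<Prod>i\<in>I. emeasure (distr (M i) (N i) (f i)) (A i))"
      using A by (intro prod.cong refl) (simp add: emeasure_distr)
    finally show "emeasure (distr (PiM I M) (PiM I N) (\<lambda>x. \<lambda>i\<in>I. f i (x i))) (Pi\<^sub>E I A)
        = (\<Prod>i\<in>I. emeasure (distr (M i) (N i) (f i)) (A i))" .
  qed
qed

lemma borel_measurable_cis [measurable]: "cis \<in> borel_measurable borel"
  by (intro borel_measurable_continuous_onI continuous_intros)

lemma distr_PiM_unif_2pi_rotate: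
  assumes "finite I"
  shows "distr (PiM I (\<lambda>_. unif_2pi)) (PiM I (\<lambda>_. unif_2pi)) (\<lambda>y. \<lambda>i\<in>I. (c i + y i) rmod (2*pi))
       = PiM I (\<lambda>_. unif_2pi)"
  using distr_PiM_componentwise[OF assms prob_space_unif_2pi prob_space_unif_2pi,
      of "\<lambda>i v. (c i + v) rmod (2*pi)"]
  by (simp add: distr_unif_2pi_rotate)

lemma integral_log_sum_cis_eq_Rbar:
  assumes "finite I" and "S \<subseteq> I"
  shows "(\<integral>y. log b (1 + (cmod (\<Sum>i\<in>S. cis (y i)))\<^sup>2 * P) \<partial>PiM I (\<lambda>_. unif_2pi)) = Rbar b P (card S)"
proof -
  have "finite S" using assms finite_subset by blast
  then obtain e where e: "bij_betw e {1..card S} S"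
    using ex_bij_betw_nat_finite_1 by blast
  have e_into: "e \<in> {1..card S} \<rightarrow> I"
    using bij_betw_imp_surj_on[OF e] assms(2) by auto
  define R where "R y = (\<lambda>j\<in>{1..card S}. y (e j))" for y :: "'a \<Rightarrow> real"
  have [measurable]: "R \<in> measurable (PiM I (\<lambda>_. unif_2pi)) (PiM {1..card S} (\<lambda>_. unif_2pi))"
    unfolding R_def using e_into by (intro measurable_restrict measurable_component_singleton) auto
  have "Rbar b P (card S)
      = (\<integral>v. log b (1 + (cmod (\<Sum>j=1..card S. cis (v j)))\<^sup>2 * P)
          \<partial>distr (PiM I (\<lambda>_. unif_2pi)) (PiM {1..card S} (\<lambda>_. unif_2pi)) R)"
    using distr_PiM_reindex[OF prob_space_unif_2pi bij_betw_imp_inj_on[OF e] e_into]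
    by (simp add: Rbar_def R_def[abs_def])
  also have "\<dots> = (\<integral>y. log b (1 + (cmod (\<Sum>j=1..card S. cis (R y j)))\<^sup>2 * P) \<partial>PiM I (\<lambda>_. unif_2pi))"
    by (rule integral_distr) measurable
  also have "\<dots> = (\<integral>y. log b (1 + (cmod (\<Sum>i\<in>S. cis (y i)))\<^sup>2 * P) \<partial>PiM I (\<lambda>_. unif_2pi))"
    by (simp add: R_def sum.reindex_bij_betw[OF e, symmetric])
  finally show ?thesis ..
qed

lemma integral_log_sum_cis_rotated_eq_Rbar:
  assumes "finite I" and "S \<subseteq> I"
  shows "(\<integral>y. log b (1 + (cmod (\<Sum>i\<in>S. cis (t i + y i)))\<^sup>2 * P) \<partial>PiM I (\<lambda>_. unif_2pi)) = Rbar b P (card S)"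
proof -
  define T where "T y = (\<lambda>i\<in>I. (y i - t i) rmod (2*pi))" for y
  have [measurable]: "T \<in> measurable (PiM I (\<lambda>_. unif_2pi)) (PiM I (\<lambda>_. unif_2pi))"
    unfolding T_def by (intro measurable_restrict) measurable
  have "(\<integral>y. log b (1 + (cmod (\<Sum>i\<in>S. cis (t i + y i)))\<^sup>2 * P) \<partial>PiM I (\<lambda>_. unif_2pi))
      = (\<integral>y. log b (1 + (cmod (\<Sum>i\<in>S. cis (t i + y i)))\<^sup>2 * P)
          \<partial>distr (PiM I (\<lambda>_. unif_2pi)) (PiM I (\<lambda>_. unif_2pi)) T)"
    using distr_PiM_unif_2pi_rotate[OF assms(1), of "\<lambda>i. - t i"] by (simp add: T_def[abs_def])
  also have "\<dots> = (\<integral>y. log b (1 + (cmod (\<Sum>i\<in>S. cis (t i + T y i)))\<^sup>2 * P) \<partial>PiM I (\<lambda>_. unif_2pi))"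
    by (rule integral_distr) (measurable, use assms(2) in auto)
  also have "\<dots> = (\<integral>y. log b (1 + (cmod (\<Sum>i\<in>S. cis (y i)))\<^sup>2 * P) \<partial>PiM I (\<lambda>_. unif_2pi))"
  proof -
    have cis_add_rmod: "cis (a + x rmod (2*pi)) = cis (a + x)" for a x
      by (simp add: cis_mult[symmetric])
    have "cis (t i + T y i) = cis (y i)" if "i \<in> S" for i y
      using that assms(2) by (auto simp: T_def cis_add_rmod)
    then show ?thesis by (simp cong: sum.cong)
  qed
  finally show ?thesis
    using integral_log_sum_cis_eq_Rbar[OF assms] by simp
qed

section \<open>Chebyshev's inequality for orthogonal variables\<close>

lemma (in product_sigma_finite) integral_mult_eq_0_if_section_integrals_eq_0:
  assumes "A \<inter> B = {}" "finite A" "finite B"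
    and "integrable (PiM (A \<union> B) M) (\<lambda>z. W z * V z)"
    and "\<And>x y. W (merge A B (x, y)) = W x"
    and "\<And>x. x \<in> space (PiM A M) \<Longrightarrow> (\<integral>y. V (merge A B (x, y)) \<partial>PiM B M) = 0"
  shows "(\<integral>z. W z * V z \<partial>PiM (A \<union> B) M) = (0::real)"
proof -
  have "(\<integral>z. W z * V z \<partial>PiM (A \<union> B) M) = (\<integral>x. (\<integral>y. W x * V (merge A B (x, y)) \<partial>PiM B M) \<partial>PiM A M)"
    using product_integral_fold[OF assms(1-4)] by (simp add: assms(5))
  also have "\<dots> = (\<integral>x. 0 \<partial>PiM A M)"
    by (intro Bochner_Integration.integral_cong) (simp_all add: assms(6))
  finally show ?thesis by simp
qed

lemma (in prob_space) second_moment_sum_orthogonal: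
  fixes Y :: "'i \<Rightarrow> 'a \<Rightarrow> real" and B :: real
  assumes "finite I"
    and [measurable]: "\<And>i. i \<in> I \<Longrightarrow> Y i \<in> borel_measurable M"
    and bounded: "\<And>i x. i \<in> I \<Longrightarrow> x \<in> space M \<Longrightarrow> \<bar>Y i x\<bar> \<le> B"
    and orthogonal: "\<And>i j. i \<in> I \<Longrightarrow> j \<in> I \<Longrightarrow> i \<noteq> j \<Longrightarrow> expectation (\<lambda>x. Y i x * Y j x) = 0"
  shows "integrable M (\<lambda>x. (\<Sum>i\<in>I. Y i x)\<^sup>2)"
    and "expectation (\<lambda>x. (\<Sum>i\<in>I. Y i x)\<^sup>2) \<le> card I * B\<^sup>2"
proof -
  have product_bounded: "\<bar>Y i x * Y j x\<bar> \<le> B\<^sup>2" if "i \<in> I" "j \<in> I" "x \<in> space M" for i j x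
    unfolding abs_mult power2_eq_square
    using bounded[OF that(1,3)] bounded[OF that(2,3)] by (intro mult_mono) auto
  have integrable: "integrable M (\<lambda>x. Y i x * Y j x)" if "i \<in> I" "j \<in> I" for i j
    using that product_bounded by (intro integrable_const_bound[where B="B\<^sup>2"]) auto
  have square: "(\<Sum>i\<in>I. Y i x)\<^sup>2 = (\<Sum>i\<in>I. \<Sum>j\<in>I. Y i x * Y j x)" for x
    by (simp add: power2_eq_square sum_product)
  show "integrable M (\<lambda>x. (\<Sum>i\<in>I. Y i x)\<^sup>2)"
    unfolding square using integrable by (intro Bochner_Integration.integrable_sum) auto
  have "expectation (\<lambda>x. (\<Sum>i\<in>I. Y i x)\<^sup>2) = (\<Sum>i\<in>I. \<Sum>j\<in>I. expectation (\<lambda>x. Y i x * Y j x))"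
    unfolding square using integrable
    by (simp add: Bochner_Integration.integral_sum Bochner_Integration.integrable_sum)
  also have "\<dots> = (\<Sum>i\<in>I. expectation (\<lambda>x. Y i x * Y i x))"
    using orthogonal \<open>finite I\<close> by (intro sum.cong refl) (auto simp: sum.remove intro!: sum.neutral)
  also have "\<dots> \<le> (\<Sum>i\<in>I. B\<^sup>2)"
    using product_bounded integrable
    by (intro sum_mono integral_le_const) (auto simp: abs_le_iff)
  finally show "expectation (\<lambda>x. (\<Sum>i\<in>I. Y i x)\<^sup>2) \<le> card I * B\<^sup>2"
    by simp
qed

lemma (in prob_space) prob_abs_average_ge_le:
  fixes Y :: "'i \<Rightarrow> 'a \<Rightarrow> real" and \<epsilon> B :: real
  assumes "finite I" "I \<noteq> {}" "\<epsilon> > 0"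
    and [measurable]: "\<And>i. i \<in> I \<Longrightarrow> Y i \<in> borel_measurable M"
    and "\<And>i x. i \<in> I \<Longrightarrow> x \<in> space M \<Longrightarrow> \<bar>Y i x\<bar> \<le> B"
    and "\<And>i j. i \<in> I \<Longrightarrow> j \<in> I \<Longrightarrow> i \<noteq> j \<Longrightarrow> expectation (\<lambda>x. Y i x * Y j x) = 0"
  shows "prob {x \<in> space M. \<epsilon> \<le> \<bar>(\<Sum>i\<in>I. Y i x) / card I\<bar>} \<le> B\<^sup>2 / (card I * \<epsilon>\<^sup>2)"
proof -
  define n where "n = real (card I)"
  have n: "n > 0" using assms(1,2) by (simp add: n_def card_gt_0_iff)
  have "{x \<in> space M. \<epsilon> \<le> \<bar>(\<Sum>i\<in>I. Y i x) / card I\<bar>} \<subseteq> {x \<in> space M. (n * \<epsilon>)\<^sup>2 \<le> (\<Sum>i\<in>I. Y i x)\<^sup>2}"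
  proof safe
    fix x assume "\<epsilon> \<le> \<bar>(\<Sum>i\<in>I. Y i x) / card I\<bar>"
    then have "n * \<epsilon> \<le> \<bar>\<Sum>i\<in>I. Y i x\<bar>"
      using n by (simp add: n_def abs_divide field_simps)
    then have "(n * \<epsilon>)\<^sup>2 \<le> \<bar>\<Sum>i\<in>I. Y i x\<bar>\<^sup>2"
      using n \<open>\<epsilon> > 0\<close> by (intro power_mono) auto
    then show "(n * \<epsilon>)\<^sup>2 \<le> (\<Sum>i\<in>I. Y i x)\<^sup>2"
      by simp
  qed
  then have "prob {x \<in> space M. \<epsilon> \<le> \<bar>(\<Sum>i\<in>I. Y i x) / card I\<bar>}
      \<le> prob {x \<in> space M. (n * \<epsilon>)\<^sup>2 \<le> (\<Sum>i\<in>I. Y i x)\<^sup>2}"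
    by (intro finite_measure_mono) measurable
  also have "\<dots> \<le> expectation (\<lambda>x. (\<Sum>i\<in>I. Y i x)\<^sup>2) / (n * \<epsilon>)\<^sup>2"
    using n \<open>\<epsilon> > 0\<close> second_moment_sum_orthogonal(1)[OF assms(1,4-6)]
    by (intro integral_Markov_inequality_measure[where A="space M"]) auto
  also have "\<dots> \<le> n * B\<^sup>2 / (n * \<epsilon>)\<^sup>2"
    using second_moment_sum_orthogonal(2)[OF assms(1,4-6)] by (intro divide_right_mono) (simp_all add: n_def)
  also have "\<dots> = B\<^sup>2 / (card I * \<epsilon>\<^sup>2)"
    using n by (simp add: n_def power2_eq_square)
  finally show ?thesis .
qed

section \<open>Rates as functions of the coordinates\<close>

definition phase_coords :: "nat \<Rightarrow> nat \<Rightarrow> rv_index set" where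
  "phase_coords L k = (\<lambda>l. IPhi l k) ` {1..L}"

definition frame_coords :: "nat \<Rightarrow> nat \<Rightarrow> rv_index set" where
  "frame_coords L K = IBeta ` {1..L} \<union> ITheta ` {1..L} \<union> (\<Union>k\<in>{1..K}. phase_coords L k)"

text \<open>Transmitter \<open>l\<close> counts as active iff its coordinate is exactly \<open>1\<close>; as \<open>\<beta>\<^sub>l \<in> {0, 1}\<close>
  almost surely, this reproduces the factor \<open>\<beta>\<^sub>l\<close> in \<open>h[k]\<close>.\<close>

definition active :: "nat \<Rightarrow> (rv_index \<Rightarrow> real) \<Rightarrow> nat set" where
  "active L z = {l \<in> {1..L}. z (IBeta l) = 1}"

definition symbol_rate :: "real \<Rightarrow> real \<Rightarrow> nat \<Rightarrow> nat \<Rightarrow> (rv_index \<Rightarrow> real) \<Rightarrow> real" where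
  "symbol_rate b P L k z = log b (1 + (cmod (\<Sum>l\<in>active L z. cis (z (ITheta l) + z (IPhi l k))))\<^sup>2 * P)"

definition ergodic_rate :: "real \<Rightarrow> real \<Rightarrow> nat \<Rightarrow> (rv_index \<Rightarrow> real) \<Rightarrow> real" where
  "ergodic_rate b P L z = Rbar b P (card (active L z))"

lemma finite_frame_coords: "finite (frame_coords L K)"
  by (simp add: frame_coords_def phase_coords_def)

lemma measurable_component_borel:
  assumes "\<And>i. sets (N i) = sets borel" and "i \<in> J"
  shows "(\<lambda>z. z i) \<in> borel_measurable (PiM J N)"
  using measurable_component_singleton[OF assms(2), of N] measurable_cong_sets[OF refl assms(1)]
  by blast

lemma symbol_rate_measurable:
  assumes "\<And>i. sets (N i) = sets borel"
    and "IBeta ` {1..L} \<union> ITheta ` {1..L} \<union> phase_coords L k \<subseteq> J"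
  shows "symbol_rate b P L k \<in> borel_measurable (PiM J N)"
proof -
  have [measurable]: "(\<lambda>z. z (IBeta l)) \<in> borel_measurable (PiM J N)"
    "(\<lambda>z. z (ITheta l)) \<in> borel_measurable (PiM J N)"
    "(\<lambda>z. z (IPhi l k)) \<in> borel_measurable (PiM J N)" if "l \<in> {1..L}" for l
    using assms that by (auto intro!: measurable_component_borel simp: phase_coords_def)
  have "(\<Sum>l\<in>active L z. cis (z (ITheta l) + z (IPhi l k)))
      = (\<Sum>l=1..L. if z (IBeta l) = 1 then cis (z (ITheta l) + z (IPhi l k)) else 0)" for z
    unfolding active_def by (rule sum.inter_filter) simp
  then have "symbol_rate b P L k = (\<lambda>z. log b (1 + (cmod (\<Sum>l=1..L.
      if z (IBeta l) = 1 then cis (z (ITheta l) + z (IPhi l k)) else 0))\<^sup>2 * P))"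
    by (simp add: fun_eq_iff symbol_rate_def)
  then show ?thesis by simp
qed

lemma ergodic_rate_measurable:
  assumes "\<And>i. sets (N i) = sets borel" and "IBeta ` {1..L} \<subseteq> J"
  shows "ergodic_rate b P L \<in> borel_measurable (PiM J N)"
proof -
  have [measurable]: "(\<lambda>z. z (IBeta l)) \<in> borel_measurable (PiM J N)" if "l \<in> {1..L}" for l
    using assms that by (auto intro!: measurable_component_borel)
  have "card (active L z) = (\<Sum>l=1..L. if z (IBeta l) = 1 then 1 else 0)" for z
    unfolding active_def by (subst sum.inter_filter[symmetric]) simp_all
  then have "ergodic_rate b P L = (\<lambda>z. Rbar b P (\<Sum>l=1..L. if z (IBeta l) = 1 then 1 else 0))"
    by (simp add: fun_eq_iff ergodic_rate_def)
  moreover have "(\<lambda>z. \<Sum>l=1..L. if z (IBeta l) = 1 then 1 else 0 :: nat) \<in> borel_measurable (PiM J N)"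
    by measurable
  moreover have "Rbar b P \<in> borel_measurable (borel :: nat measure)"
    using borel_measurable_count_space measurable_cong_sets[OF sets_borel_eq_count_space refl] by blast
  ultimately show ?thesis
    by (simp only:) (rule measurable_compose)
qed

lemma abs_log_mono:
  assumes "1 \<le> x" "x \<le> y"
  shows "\<bar>log b x\<bar> \<le> \<bar>log b y\<bar>"
  using assms by (simp add: log_def abs_divide divide_right_mono)

lemma abs_log_one_plus_sq_le:
  assumes "P \<ge> 0" "0 \<le> r" "r \<le> real L"
  shows "\<bar>log b (1 + r\<^sup>2 * P)\<bar> \<le> \<bar>log b (1 + (real L)\<^sup>2 * P)\<bar>"
  using assms by (intro abs_log_mono) (auto intro!: mult_right_mono power_mono)

lemma norm_sum_cis_le_card: "cmod (\<Sum>i\<in>S. cis (a i)) \<le> real (card S)"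
  using norm_sum[of "\<lambda>i. cis (a i)" S] by simp

lemma card_active_le: "card (active L z) \<le> L"
  unfolding active_def by (rule order_trans[OF card_mono[of "{1..L}"]]) auto

lemma abs_symbol_rate_le:
  assumes "P \<ge> 0"
  shows "\<bar>symbol_rate b P L k z\<bar> \<le> \<bar>log b (1 + (real L)\<^sup>2 * P)\<bar>"
  unfolding symbol_rate_def using assms card_active_le[of L z]
  by (intro abs_log_one_plus_sq_le) (auto intro: order_trans[OF norm_sum_cis_le_card])

lemma abs_Rbar_le:
  assumes "P \<ge> 0" "i \<le> L"
  shows "\<bar>Rbar b P i\<bar> \<le> \<bar>log b (1 + (real L)\<^sup>2 * P)\<bar>"
proof -
  interpret prob_space "PiM {1..i} (\<lambda>_. unif_2pi)"
    by (intro prob_space_PiM prob_space_unif_2pi)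
  have bound: "\<bar>log b (1 + (cmod (\<Sum>l=1..i. cis (v l)))\<^sup>2 * P)\<bar> \<le> \<bar>log b (1 + (real L)\<^sup>2 * P)\<bar>" for v
    using assms norm_sum_cis_le_card[of v "{1..i}"] by (intro abs_log_one_plus_sq_le) auto
  have "\<bar>Rbar b P i\<bar> \<le> (\<integral>v. \<bar>log b (1 + (cmod (\<Sum>l=1..i. cis (v l)))\<^sup>2 * P)\<bar> \<partial>PiM {1..i} (\<lambda>_. unif_2pi))"
    unfolding Rbar_def
    using integral_norm_bound[of "PiM {1..i} (\<lambda>_. unif_2pi)" "\<lambda>v. log b (1 + (cmod (\<Sum>l=1..i. cis (v l)))\<^sup>2 * P)"]
    by simp
  also have "\<dots> \<le> \<bar>log b (1 + (real L)\<^sup>2 * P)\<bar>"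
    using bound by (intro integral_le_const integrable_const_bound[where B="\<bar>log b (1 + (real L)\<^sup>2 * P)\<bar>"]) auto
  finally show ?thesis .
qed

lemma abs_ergodic_rate_le:
  assumes "P \<ge> 0"
  shows "\<bar>ergodic_rate b P L z\<bar> \<le> \<bar>log b (1 + (real L)\<^sup>2 * P)\<bar>"
  unfolding ergodic_rate_def using assms card_active_le by (rule abs_Rbar_le)

lemma symbol_rate_merge:
  assumes "IBeta ` {1..L} \<union> ITheta ` {1..L} \<union> phase_coords L k \<subseteq> A"
  shows "symbol_rate b P L k (merge A B (x, y)) = symbol_rate b P L k x"
proof -
  have "IBeta l \<in> A" "ITheta l \<in> A" "IPhi l k \<in> A" if "l \<in> {1..L}" for l
    using assms that by (auto simp: phase_coords_def)
  then have merge: "merge A B (x, y) (IBeta l) = x (IBeta l)"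
    "merge A B (x, y) (ITheta l) = x (ITheta l)" "merge A B (x, y) (IPhi l k) = x (IPhi l k)"
    if "l \<in> {1..L}" for l
    using that by (simp_all add: merge_def)
  have "active L (merge A B (x, y)) = active L x"
    using merge(1) by (auto simp: active_def)
  moreover have "(\<Sum>l\<in>active L x. cis (merge A B (x, y) (ITheta l) + merge A B (x, y) (IPhi l k)))
      = (\<Sum>l\<in>active L x. cis (x (ITheta l) + x (IPhi l k)))"
  proof (rule sum.cong[OF refl])
    fix l assume "l \<in> active L x"
    then have "l \<in> {1..L}" by (simp add: active_def)
    then show "cis (merge A B (x, y) (ITheta l) + merge A B (x, y) (IPhi l k)) = cis (x (ITheta l) + x (IPhi l k))"
      by (simp only: merge)
  qed
  ultimately show ?thesis
    unfolding symbol_rate_def by simp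
qed

lemma ergodic_rate_merge:
  assumes "IBeta ` {1..L} \<subseteq> A"
  shows "ergodic_rate b P L (merge A B (x, y)) = ergodic_rate b P L x"
proof -
  have "merge A B (x, y) (IBeta l) = x (IBeta l)" if "l \<in> {1..L}" for l
  proof -
    have "IBeta l \<in> A" using assms that by auto
    then show ?thesis by (simp add: merge_def)
  qed
  then have "active L (merge A B (x, y)) = active L x"
    by (auto simp: active_def)
  then show ?thesis by (simp add: ergodic_rate_def)
qed

lemma symbol_rate_merge_phases:
  assumes "IBeta ` {1..L} \<union> ITheta ` {1..L} \<subseteq> A" and "A \<inter> phase_coords L k = {}"
  shows "symbol_rate b P L k (merge A (phase_coords L k) (x, y))
       = log b (1 + (cmod (\<Sum>l\<in>active L x. cis (x (ITheta l) + y (IPhi l k))))\<^sup>2 * P)"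
proof -
  have "IBeta l \<in> A" "ITheta l \<in> A" "IPhi l k \<in> phase_coords L k" if "l \<in> {1..L}" for l
    using assms(1) that by (auto simp: phase_coords_def)
  then have merge: "merge A (phase_coords L k) (x, y) (IBeta l) = x (IBeta l)"
    "merge A (phase_coords L k) (x, y) (ITheta l) = x (ITheta l)"
    "merge A (phase_coords L k) (x, y) (IPhi l k) = y (IPhi l k)" if "l \<in> {1..L}" for l
    using assms(2) that by auto
  have "active L (merge A (phase_coords L k) (x, y)) = active L x"
    using merge(1) by (auto simp: active_def)
  moreover have "(\<Sum>l\<in>active L x. cis (merge A (phase_coords L k) (x, y) (ITheta l) + merge A (phase_coords L k) (x, y) (IPhi l k)))
      = (\<Sum>l\<in>active L x. cis (x (ITheta l) + y (IPhi l k)))"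
  proof (rule sum.cong[OF refl])
    fix l assume "l \<in> active L x"
    then have "l \<in> {1..L}" by (simp add: active_def)
    then show "cis (merge A (phase_coords L k) (x, y) (ITheta l) + merge A (phase_coords L k) (x, y) (IPhi l k))
        = cis (x (ITheta l) + y (IPhi l k))"
      by (simp only: merge)
  qed
  ultimately show ?thesis
    unfolding symbol_rate_def by simp
qed

lemma integral_symbol_rate_phases_eq_ergodic_rate:
  assumes "IBeta ` {1..L} \<union> ITheta ` {1..L} \<subseteq> A" and "A \<inter> phase_coords L k = {}"
  shows "(\<integral>y. symbol_rate b P L k (merge A (phase_coords L k) (x, y)) \<partial>PiM (phase_coords L k) (\<lambda>_. unif_2pi))
       = ergodic_rate b P L x"
proof -
  define t where "t i = (case i of IPhi l _ \<Rightarrow> x (ITheta l) | _ \<Rightarrow> 0)" for i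
  have inj: "inj_on (\<lambda>l. IPhi l k) S" for S
    by (auto intro: inj_onI)
  have sub: "(\<lambda>l. IPhi l k) ` active L x \<subseteq> phase_coords L k"
    by (auto simp: phase_coords_def active_def)
  have "symbol_rate b P L k (merge A (phase_coords L k) (x, y))
      = log b (1 + (cmod (\<Sum>i\<in>(\<lambda>l. IPhi l k) ` active L x. cis (t i + y i)))\<^sup>2 * P)" for y
    unfolding symbol_rate_merge_phases[OF assms] sum.reindex[OF inj] by (simp add: t_def)
  then show ?thesis
    using integral_log_sum_cis_rotated_eq_Rbar[OF _ sub, where t=t and b=b and P=P]
    by (simp add: ergodic_rate_def card_image[OF inj] phase_coords_def)
qed

lemma frame_coords_supset:
  "k \<in> {1..K} \<Longrightarrow> IBeta ` {1..L} \<union> ITheta ` {1..L} \<union> phase_coords L k \<subseteq> frame_coords L K"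
  by (auto simp: frame_coords_def)

lemma abs_symbol_rate_deviation_le:
  assumes "P \<ge> 0"
  shows "\<bar>symbol_rate b P L k z - ergodic_rate b P L z\<bar> \<le> 2 * \<bar>log b (1 + (real L)\<^sup>2 * P)\<bar>"
  using abs_symbol_rate_le[OF assms, of b L k z] abs_ergodic_rate_le[OF assms, of b L z] by linarith

lemma integral_symbol_rate_deviation_phases_eq_0:
  assumes prob: "\<And>i. prob_space (N i)" and sets: "\<And>i. sets (N i) = sets borel"
    and phases: "\<And>l. l \<in> {1..L} \<Longrightarrow> N (IPhi l k) = unif_2pi"
    and A: "IBeta ` {1..L} \<union> ITheta ` {1..L} \<subseteq> A" "A \<inter> phase_coords L k = {}"
    and x: "x \<in> space (PiM A N)" and "P \<ge> 0"
  shows "(\<integral>y. symbol_rate b P L k (merge A (phase_coords L k) (x, y))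
             - ergodic_rate b P L (merge A (phase_coords L k) (x, y)) \<partial>PiM (phase_coords L k) N) = 0"
proof -
  interpret prob_space "PiM (phase_coords L k) N" by (rule prob_space_PiM) (rule prob)
  have [measurable]: "symbol_rate b P L k \<in> borel_measurable (PiM (A \<union> phase_coords L k) N)"
    using sets A(1) by (intro symbol_rate_measurable) auto
  have "PiM (phase_coords L k) N = PiM (phase_coords L k) (\<lambda>_. unif_2pi)"
    by (intro PiM_cong) (auto simp: phase_coords_def phases)
  then have "(\<integral>y. symbol_rate b P L k (merge A (phase_coords L k) (x, y)) \<partial>PiM (phase_coords L k) N)
      = ergodic_rate b P L x"
    using integral_symbol_rate_phases_eq_ergodic_rate[OF A] by simp
  moreover have "integrable (PiM (phase_coords L k) N) (\<lambda>y. symbol_rate b P L k (merge A (phase_coords L k) (x, y)))"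
    using x abs_symbol_rate_le[OF \<open>P \<ge> 0\<close>]
    by (intro integrable_const_bound[where B="\<bar>log b (1 + (real L)\<^sup>2 * P)\<bar>"]) auto
  ultimately show ?thesis
    using ergodic_rate_merge A(1) by (simp add: prob_space)
qed

lemma integral_symbol_rate_deviations_orthogonal:
  assumes prob: "\<And>i. prob_space (N i)" and sets: "\<And>i. sets (N i) = sets borel"
    and phases: "\<And>l k. l \<in> {1..L} \<Longrightarrow> k \<in> {1..K} \<Longrightarrow> N (IPhi l k) = unif_2pi"
    and "P \<ge> 0" and k: "k \<in> {1..K}" "k' \<in> {1..K}" "k \<noteq> k'"
  shows "(\<integral>z. (symbol_rate b P L k' z - ergodic_rate b P L z) * (symbol_rate b P L k z - ergodic_rate b P L z)
           \<partial>PiM (frame_coords L K) N) = 0"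
proof -
  interpret product_prob_space N by (intro product_prob_spaceI prob)
  interpret prob_space "PiM (frame_coords L K) N" by (rule prob_space_PiM) (rule prob)
  define A where "A = frame_coords L K - phase_coords L k"
  have AB: "frame_coords L K = A \<union> phase_coords L k" "A \<inter> phase_coords L k = {}"
    "finite A" "finite (phase_coords L k)"
    using frame_coords_supset[OF k(1), where L=L] finite_frame_coords[of L K]
    by (auto simp: A_def phase_coords_def)
  have A: "IBeta ` {1..L} \<union> ITheta ` {1..L} \<union> phase_coords L k' \<subseteq> A"
    using frame_coords_supset[OF k(2), where L=L] k by (auto simp: A_def phase_coords_def)
  have [measurable]: "symbol_rate b P L j \<in> borel_measurable (PiM (frame_coords L K) N)" if "j \<in> {1..K}" for j
    using sets frame_coords_supset[OF that] by (rule symbol_rate_measurable)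
  have [measurable]: "ergodic_rate b P L \<in> borel_measurable (PiM (frame_coords L K) N)"
    using sets by (rule ergodic_rate_measurable) (auto simp: frame_coords_def)
  define c where "c = 2 * \<bar>log b (1 + (real L)\<^sup>2 * P)\<bar>"
  have "\<bar>(symbol_rate b P L k' z - ergodic_rate b P L z) * (symbol_rate b P L k z - ergodic_rate b P L z)\<bar>
      \<le> c * c" for z
    unfolding abs_mult c_def by (intro mult_mono abs_symbol_rate_deviation_le \<open>P \<ge> 0\<close>) auto
  then have "integrable (PiM (frame_coords L K) N)
      (\<lambda>z. (symbol_rate b P L k' z - ergodic_rate b P L z) * (symbol_rate b P L k z - ergodic_rate b P L z))"
    using k by (intro integrable_const_bound) auto
  then show ?thesis
    unfolding AB(1)
  proof (rule integral_mult_eq_0_if_section_integrals_eq_0[OF AB(2-4)])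
    show "symbol_rate b P L k' (merge A (phase_coords L k) (x, y)) - ergodic_rate b P L (merge A (phase_coords L k) (x, y))
        = symbol_rate b P L k' x - ergodic_rate b P L x" for x y
      using symbol_rate_merge[OF A] ergodic_rate_merge A by simp
    show "(\<integral>y. symbol_rate b P L k (merge A (phase_coords L k) (x, y))
             - ergodic_rate b P L (merge A (phase_coords L k) (x, y)) \<partial>PiM (phase_coords L k) N) = 0"
      if "x \<in> space (PiM A N)" for x
      using integral_symbol_rate_deviation_phases_eq_0[OF prob sets _ _ AB(2) that \<open>P \<ge> 0\<close>] phases k(1) A
      by blast
  qed
qed

lemma prob_symbol_rate_average_deviation_le:
  assumes prob: "\<And>i. prob_space (N i)" and sets: "\<And>i. sets (N i) = sets borel"
    and phases: "\<And>l k. l \<in> {1..L} \<Longrightarrow> k \<in> {1..K} \<Longrightarrow> N (IPhi l k) = unif_2pi"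
    and "P \<ge> 0" "K \<ge> 1" "\<epsilon> > 0"
  shows "measure (PiM (frame_coords L K) N) {z \<in> space (PiM (frame_coords L K) N).
            \<epsilon> \<le> \<bar>(1 / real K) * (\<Sum>k=1..K. symbol_rate b P L k z) - ergodic_rate b P L z\<bar>}
         \<le> (2 * \<bar>log b (1 + (real L)\<^sup>2 * P)\<bar>)\<^sup>2 / (real K * \<epsilon>\<^sup>2)"
proof -
  interpret prob_space "PiM (frame_coords L K) N" by (rule prob_space_PiM) (rule prob)
  have [measurable]: "symbol_rate b P L k \<in> borel_measurable (PiM (frame_coords L K) N)" if "k \<in> {1..K}" for k
    using sets frame_coords_supset[OF that] by (rule symbol_rate_measurable)
  have [measurable]: "ergodic_rate b P L \<in> borel_measurable (PiM (frame_coords L K) N)"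
    using sets by (rule ergodic_rate_measurable) (auto simp: frame_coords_def)
  have average: "(1 / real K) * (\<Sum>k=1..K. symbol_rate b P L k z) - ergodic_rate b P L z
      = (\<Sum>k=1..K. symbol_rate b P L k z - ergodic_rate b P L z) / card {1..K}" for z
    using \<open>K \<ge> 1\<close> by (simp add: sum_subtractf field_simps)
  have "prob {z \<in> space (PiM (frame_coords L K) N).
      \<epsilon> \<le> \<bar>(\<Sum>k=1..K. symbol_rate b P L k z - ergodic_rate b P L z) / card {1..K}\<bar>}
    \<le> (2 * \<bar>log b (1 + (real L)\<^sup>2 * P)\<bar>)\<^sup>2 / (card {1..K} * \<epsilon>\<^sup>2)"
  proof (rule prob_abs_average_ge_le[where Y="\<lambda>k z. symbol_rate b P L k z - ergodic_rate b P L z"])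
    show "\<bar>symbol_rate b P L k z - ergodic_rate b P L z\<bar> \<le> 2 * \<bar>log b (1 + (real L)\<^sup>2 * P)\<bar>" for k z
      using \<open>P \<ge> 0\<close> by (rule abs_symbol_rate_deviation_le)
    show "expectation (\<lambda>z. (symbol_rate b P L k z - ergodic_rate b P L z) * (symbol_rate b P L k' z - ergodic_rate b P L z)) = 0"
      if "k \<in> {1..K}" "k' \<in> {1..K}" "k \<noteq> k'" for k k'
      using integral_symbol_rate_deviations_orthogonal[where N=N and L=L and K=K and b=b,
          OF prob sets phases \<open>P \<ge> 0\<close> that(2,1) that(3)[symmetric]] .
  qed (use \<open>K \<ge> 1\<close> \<open>\<epsilon> > 0\<close> in auto)
  then show ?thesis
    unfolding average by simp
qed

section \<open>The phase-diversity model\<close>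

lemma (in prob_space) AE_two_valued:
  assumes "f \<in> measurable M (count_space UNIV)" and "a \<noteq> c"
    and "prob {x \<in> space M. f x = a} = p" and "prob {x \<in> space M. f x = c} = 1 - p"
  shows "AE x in M. f x = a \<or> f x = c"
proof -
  have [measurable]: "{x \<in> space M. f x = a} \<in> events" "{x \<in> space M. f x = c} \<in> events"
    using assms(1) by measurable
  have "prob ({x \<in> space M. f x = a} \<union> {x \<in> space M. f x = c}) = 1"
    using assms(2-4) by (subst finite_measure_Union) auto
  moreover have "{x \<in> space M. f x = a} \<union> {x \<in> space M. f x = c} = {x \<in> space M. f x = a \<or> f x = c}"
    by auto
  ultimately have "prob {x \<in> space M. f x = a \<or> f x = c} = 1" by simp
  then have "AE x in M. x \<in> {x \<in> space M. f x = a \<or> f x = c}" by (rule AE_prob_1)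
  then show ?thesis by auto
qed

locale phase_diversity = prob_space M
  for M :: "'a measure" and L :: nat
    and \<beta> :: "nat \<Rightarrow> 'a \<Rightarrow> nat" and \<theta> :: "nat \<Rightarrow> 'a \<Rightarrow> real" and \<phi> :: "nat \<Rightarrow> nat \<Rightarrow> 'a \<Rightarrow> real" +
  assumes L_pos: "L \<ge> 1"
    and beta_measurable: "\<And>l. l \<in> {1..L} \<Longrightarrow> \<beta> l \<in> measurable M (count_space UNIV)"
    and beta_binary: "AE x in M. \<forall>l\<in>{1..L}. \<beta> l x = 0 \<or> \<beta> l x = 1"
    and theta_measurable: "\<And>l. l \<in> {1..L} \<Longrightarrow> \<theta> l \<in> borel_measurable M"
    and phi_uniform: "\<And>l k. l \<in> {1..L} \<Longrightarrow> k \<ge> 1 \<Longrightarrow>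
                        \<phi> l k \<in> borel_measurable M \<and> distr M lborel (\<phi> l k) = unif_2pi"
    and independent: "indep_vars (\<lambda>_. borel)
        (\<lambda>i. case i of IBeta l \<Rightarrow> (\<lambda>x. real (\<beta> l x)) | ITheta l \<Rightarrow> \<theta> l | IPhi l k \<Rightarrow> \<phi> l k)
        (IBeta ` {1..L} \<union> ITheta ` {1..L} \<union> {IPhi l k | l k. l \<in> {1..L} \<and> k \<ge> 1})"
begin

definition coord :: "rv_index \<Rightarrow> 'a \<Rightarrow> real" where
  "coord i = (case i of IBeta l \<Rightarrow> (\<lambda>x. real (\<beta> l x)) | ITheta l \<Rightarrow> \<theta> l | IPhi l k \<Rightarrow> \<phi> l k)"

text \<open>The fallback \<open>unif_2pi\<close> only makes every \<open>law i\<close> a probability measure; on the frame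
  coordinates \<open>coord i\<close> is measurable and the first branch applies.\<close>

definition law :: "rv_index \<Rightarrow> real measure" where
  "law i = (if coord i \<in> borel_measurable M then distr M borel (coord i) else unif_2pi)"

definition sample :: "nat \<Rightarrow> 'a \<Rightarrow> rv_index \<Rightarrow> real" where
  "sample K x = (\<lambda>i\<in>frame_coords L K. coord i x)"

lemma coord_measurable: "i \<in> frame_coords L K \<Longrightarrow> coord i \<in> borel_measurable M"
  using beta_measurable theta_measurable phi_uniform
  by (auto simp: frame_coords_def phase_coords_def coord_def)

lemma prob_space_law: "prob_space (law i)"
  by (simp add: law_def prob_space_distr prob_space_unif_2pi)

lemma sets_law: "sets (law i) = sets borel"
  by (simp add: law_def)

lemma law_phase: "l \<in> {1..L} \<Longrightarrow> k \<in> {1..K} \<Longrightarrow> law (IPhi l k) = unif_2pi"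
proof -
  assume "l \<in> {1..L}" "k \<in> {1..K}"
  then have "\<phi> l k \<in> borel_measurable M" "distr M lborel (\<phi> l k) = unif_2pi"
    using phi_uniform[of l k] by auto
  moreover have "distr M borel (\<phi> l k) = distr M lborel (\<phi> l k)"
    by (rule distr_cong) simp_all
  ultimately show ?thesis
    by (simp add: law_def coord_def)
qed

lemma sample_measurable: "sample K \<in> measurable M (PiM (frame_coords L K) law)"
  unfolding sample_def using coord_measurable
  by (intro measurable_restrict) (simp add: measurable_cong_sets[OF refl sets_law])

lemma distr_sample: "distr M (PiM (frame_coords L K) law) (sample K) = PiM (frame_coords L K) law"
proof -
  have sub: "frame_coords L K \<subseteq> IBeta ` {1..L} \<union> ITheta ` {1..L} \<union> {IPhi l k | l k. l \<in> {1..L} \<and> k \<ge> 1}"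
    by (auto simp: frame_coords_def phase_coords_def)
  have "indep_vars (\<lambda>_. borel) coord (frame_coords L K)"
    using indep_vars_subset[OF independent sub] unfolding coord_def[abs_def] .
  moreover have "frame_coords L K \<noteq> {}"
    using L_pos by (auto simp: frame_coords_def)
  moreover have "distr M (PiM (frame_coords L K) law) (sample K)
      = distr M (PiM (frame_coords L K) (\<lambda>_. borel)) (\<lambda>x. \<lambda>i\<in>frame_coords L K. coord i x)"
    by (intro distr_cong sets_PiM_cong) (simp_all add: sets_law sample_def)
  ultimately have "distr M (PiM (frame_coords L K) law) (sample K)
      = PiM (frame_coords L K) (\<lambda>i. distr M borel (coord i))"
    using coord_measurable by (simp add: indep_vars_iff_distr_eq_PiM')
  also have "\<dots> = PiM (frame_coords L K) law"
    using coord_measurable by (intro PiM_cong) (simp_all add: law_def)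
  finally show ?thesis .
qed

lemma prob_sample_vimage:
  "E \<in> sets (PiM (frame_coords L K) law) \<Longrightarrow>
    prob (sample K -` E \<inter> space M) = measure (PiM (frame_coords L K) law) E"
  using measure_distr[OF sample_measurable] by (simp add: distr_sample)

lemma active_sample: "active L (sample K x) = {l \<in> {1..L}. \<beta> l x = 1}"
  by (auto simp: active_def sample_def frame_coords_def coord_def)

lemma symbol_rate_sample:
  assumes "\<forall>l\<in>{1..L}. \<beta> l x = 0 \<or> \<beta> l x = 1" and "k \<in> {1..K}"
  shows "symbol_rate b P L k (sample K x)
       = log b (1 + (cmod (\<Sum>l=1..L. of_nat (\<beta> l x) * cis (\<theta> l x + \<phi> l k x)))\<^sup>2 * P)"
proof -
  have "ITheta l \<in> frame_coords L K" "IPhi l k \<in> frame_coords L K" if "l \<in> {1..L}" for l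
    using that frame_coords_supset[OF assms(2), of L] by (auto simp: phase_coords_def)
  then have "sample K x (ITheta l) = \<theta> l x" "sample K x (IPhi l k) = \<phi> l k x" if "l \<in> {1..L}" for l
    using that by (simp_all add: sample_def coord_def)
  then have "(\<Sum>l\<in>active L (sample K x). cis (sample K x (ITheta l) + sample K x (IPhi l k)))
      = (\<Sum>l=1..L. if \<beta> l x = 1 then cis (\<theta> l x + \<phi> l k x) else 0)"
    unfolding active_sample by (subst sum.inter_filter[symmetric]) (auto intro: sum.cong)
  also have "\<dots> = (\<Sum>l=1..L. of_nat (\<beta> l x) * cis (\<theta> l x + \<phi> l k x))"
    using assms(1) by (intro sum.cong refl) auto
  finally show ?thesis
    by (simp add: symbol_rate_def)
qed

lemma ergodic_rate_sample:
  assumes "\<forall>l\<in>{1..L}. \<beta> l x = 0 \<or> \<beta> l x = 1"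
  shows "ergodic_rate b P L (sample K x) = Rbar b P (\<Sum>l=1..L. \<beta> l x)"
proof -
  have "card {l \<in> {1..L}. \<beta> l x = 1} = (\<Sum>l=1..L. if \<beta> l x = 1 then 1 else 0)"
    by (subst sum.inter_filter[symmetric]) simp_all
  also have "\<dots> = (\<Sum>l=1..L. \<beta> l x)"
    using assms by (intro sum.cong refl) auto
  finally show ?thesis
    by (simp add: ergodic_rate_def active_sample)
qed

lemma prob_rate_average_deviation_le:
  assumes "P \<ge> 0" "K \<ge> 1" "\<epsilon> > 0"
  shows "prob {x \<in> space M.
            \<bar>(1 / real K) * (\<Sum>k=1..K. log b (1 + (cmod (\<Sum>l=1..L. of_nat (\<beta> l x) * cis (\<theta> l x + \<phi> l k x)))\<^sup>2 * P))
              - Rbar b P (\<Sum>l=1..L. \<beta> l x)\<bar> \<ge> \<epsilon>}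
         \<le> (2 * \<bar>log b (1 + (real L)\<^sup>2 * P)\<bar>)\<^sup>2 / (real K * \<epsilon>\<^sup>2)" (is "prob ?E \<le> ?bound")
proof -
  define E' where "E' = {z \<in> space (PiM (frame_coords L K) law).
      \<epsilon> \<le> \<bar>(1 / real K) * (\<Sum>k=1..K. symbol_rate b P L k z) - ergodic_rate b P L z\<bar>}"
  have [measurable]: "symbol_rate b P L k \<in> borel_measurable (PiM (frame_coords L K) law)" if "k \<in> {1..K}" for k
    using sets_law frame_coords_supset[OF that] by (rule symbol_rate_measurable)
  have [measurable]: "ergodic_rate b P L \<in> borel_measurable (PiM (frame_coords L K) law)"
    using sets_law by (rule ergodic_rate_measurable) (auto simp: frame_coords_def)
  have E': "E' \<in> sets (PiM (frame_coords L K) law)"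
    unfolding E'_def by measurable
  have vimage_bound: "prob (sample K -` E' \<inter> space M) \<le> ?bound"
    unfolding prob_sample_vimage[OF E'] unfolding E'_def
    by (rule prob_symbol_rate_average_deviation_le[where N=law, OF prob_space_law sets_law law_phase assms])
  have "AE x in M. x \<in> ?E \<longleftrightarrow> x \<in> sample K -` E' \<inter> space M"
    using beta_binary
  proof eventually_elim
    case (elim x)
    have "(\<Sum>k=1..K. symbol_rate b P L k (sample K x))
        = (\<Sum>k=1..K. log b (1 + (cmod (\<Sum>l=1..L. of_nat (\<beta> l x) * cis (\<theta> l x + \<phi> l k x)))\<^sup>2 * P))"
      using symbol_rate_sample[OF elim] by (intro sum.cong) auto
    then show ?case
      using measurable_space[OF sample_measurable] by (auto simp: E'_def ergodic_rate_sample[OF elim])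
  qed
  moreover have "sample K -` E' \<inter> space M \<in> events"
    using sample_measurable E' by (rule measurable_sets)
  ultimately show ?thesis
  proof (cases "?E \<in> events")
    case True
    from \<open>AE x in M. _\<close> True \<open>sample K -` E' \<inter> space M \<in> events\<close>
    have "prob ?E = prob (sample K -` E' \<inter> space M)"
      by (rule measure_eq_AE)
    with vimage_bound show ?thesis
      by (simp only:)
  qed (simp add: measure_notin_sets)
qed

end

theorem proposition5:
  fixes M :: "'a measure"
    and L :: nat and P pB b \<epsilon> :: real
    and \<beta> :: "nat \<Rightarrow> 'a \<Rightarrow> nat"
    and \<theta> :: "nat \<Rightarrow> 'a \<Rightarrow> real"
    and \<phi> :: "nat \<Rightarrow> nat \<Rightarrow> 'a \<Rightarrow> real"
  assumes "prob_space M"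
    and "L \<ge> 1" and "P \<ge> 0" and "0 \<le> pB" and "pB \<le> 1"
    and "b > 0" and "b \<noteq> 1"
    and beta_rv: "\<And>l. l \<in> {1..L} \<Longrightarrow> \<beta> l \<in> measurable M (count_space UNIV)"
    and beta0: "\<And>l. l \<in> {1..L} \<Longrightarrow> measure M {x \<in> space M. \<beta> l x = 0} = pB"
    and beta1: "\<And>l. l \<in> {1..L} \<Longrightarrow> measure M {x \<in> space M. \<beta> l x = 1} = 1 - pB"
    and theta_unif: "\<And>l. l \<in> {1..L} \<Longrightarrow> \<theta> l \<in> borel_measurable M \<and> distr M lborel (\<theta> l) = unif_2pi"
    and phi_unif: "\<And>l k. l \<in> {1..L} \<Longrightarrow> k \<ge> 1 \<Longrightarrow>
                      \<phi> l k \<in> borel_measurable M \<and> distr M lborel (\<phi> l k) = unif_2pi"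
    and indep: "prob_space.indep_vars M (\<lambda>_. borel)
        (\<lambda>i. case i of IBeta l \<Rightarrow> (\<lambda>x. real (\<beta> l x)) | ITheta l \<Rightarrow> \<theta> l | IPhi l k \<Rightarrow> \<phi> l k)
        (IBeta ` {1..L} \<union> ITheta ` {1..L} \<union> {IPhi l k | l k. l \<in> {1..L} \<and> k \<ge> 1})"
    and "\<epsilon> > 0"
  shows "(\<lambda>K::nat. measure M {x \<in> space M.
            \<bar>(1 / real K) * (\<Sum>k=1..K. log b (1 + (cmod (\<Sum>l=1..L. of_nat (\<beta> l x) * cis (\<theta> l x + \<phi> l k x)))\<^sup>2 * P))
              - Rbar b P (\<Sum>l=1..L. \<beta> l x)\<bar> \<ge> \<epsilon>}) \<longlonglongrightarrow> 0"
proof -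
  interpret prob_space M by fact
  have beta_binary: "AE x in M. \<forall>l\<in>{1..L}. \<beta> l x = 0 \<or> \<beta> l x = 1"
    using AE_two_valued[OF beta_rv _ beta0 beta1] by (intro AE_finite_allI) auto
  interpret phase_diversity M L \<beta> \<theta> \<phi>
    using assms beta_binary by unfold_locales auto
  define C where "C = (2 * \<bar>log b (1 + (real L)\<^sup>2 * P)\<bar>)\<^sup>2 / \<epsilon>\<^sup>2"
  show ?thesis
  proof (rule tendsto_sandwich[where f="\<lambda>_. 0" and h="\<lambda>K. C / real K"])
    show "\<forall>\<^sub>F K in sequentially. measure M {x \<in> space M.
            \<bar>(1 / real K) * (\<Sum>k=1..K. log b (1 + (cmod (\<Sum>l=1..L. of_nat (\<beta> l x) * cis (\<theta> l x + \<phi> l k x)))\<^sup>2 * P))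
              - Rbar b P (\<Sum>l=1..L. \<beta> l x)\<bar> \<ge> \<epsilon>} \<le> C / real K"
      using eventually_ge_at_top[of 1]
      by eventually_elim (use prob_rate_average_deviation_le[OF \<open>P \<ge> 0\<close> _ \<open>\<epsilon> > 0\<close>] in \<open>simp add: C_def ac_simps\<close>)
  qed (auto intro: lim_const_over_n)
qed

end
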